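(* Let $G$ be a finite simple graph with $G\in\mathcal{F}_2$. Then $crx_2(G)=3$ if and only if $G$ is a complete graph on at least $3$ vertices.
   Context: An edge-coloured cycle is rainbow if all its edges have distinct colours. For $k\ge 1$, $\mathcal{F}_k$ is the family of graphs in which any $k$ vertices lie on a common cycle. For $G\in\mathcal{F}_k$, a $k$-rainbow cycle colouring of $G$ is an edge-colouring such that any $k$ vertices of $G$ lie on a common rainbow cycle; $crx_k(G)$ is the minimum number of colours in a $k$-rainbow cycle colouring of $G$. *)

theory Defs
  imports Main
begin

definition simple_graph :: "'a set \<Rightarrow> 'a set set \<Rightarrow> bool" where
  "simple_graph V E \<longleftrightarrow> finite V \<and> (\<forall>e\<in>E. e \<subseteq> V \<and> card e = 2)"

definition complete_graph :: "'a set \<Rightarrow> 'a set set \<Rightarrow> bool" where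
  "complete_graph V E \<longleftrightarrow> E = {e. e \<subseteq> V \<and> card e = 2}"

definition is_cycle :: "'a set \<Rightarrow> 'a set set \<Rightarrow> 'a list \<Rightarrow> bool" where
  "is_cycle V E vs \<longleftrightarrow> distinct vs \<and> length vs \<ge> 3 \<and> set vs \<subseteq> V \<and>
     (\<forall>i < length vs. {vs ! i, vs ! ((i + 1) mod length vs)} \<in> E)"

definition cycle_edges :: "'a list \<Rightarrow> 'a set set" where
  "cycle_edges vs = {{vs ! i, vs ! ((i + 1) mod length vs)} | i. i < length vs}"

definition in_F :: "nat \<Rightarrow> 'a set \<Rightarrow> 'a set set \<Rightarrow> bool" where
  "in_F k V E \<longleftrightarrow> (\<forall>S \<subseteq> V. card S = k \<longrightarrow> (\<exists>vs. is_cycle V E vs \<and> S \<subseteq> set vs))"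

definition rainbow_cycle :: "'a set \<Rightarrow> 'a set set \<Rightarrow> ('a set \<Rightarrow> 'c) \<Rightarrow> 'a list \<Rightarrow> bool" where
  "rainbow_cycle V E c vs \<longleftrightarrow> is_cycle V E vs \<and> inj_on c (cycle_edges vs)"

definition k_rainbow_cycle_colouring ::
    "nat \<Rightarrow> 'a set \<Rightarrow> 'a set set \<Rightarrow> ('a set \<Rightarrow> 'c) \<Rightarrow> bool" where
  "k_rainbow_cycle_colouring k V E c \<longleftrightarrow>
     (\<forall>S \<subseteq> V. card S = k \<longrightarrow> (\<exists>vs. rainbow_cycle V E c vs \<and> S \<subseteq> set vs))"

definition crx :: "nat \<Rightarrow> 'a set \<Rightarrow> 'a set set \<Rightarrow> nat" where
  "crx k V E = (LEAST n. \<exists>c :: 'a set \<Rightarrow> nat.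
      k_rainbow_cycle_colouring k V E c \<and> card (c ` E) = n)"

end

theory Submission
  imports Defs
begin

text \<open>A rainbow cycle of length n carries n distinct colours, so every 2-rainbow cycle colouring
  uses at least 3 colours, and with exactly 3 colours every pair of vertices lies on a rainbow
  triangle, which forces the graph to be complete. Conversely, the complete graph on n \<noteq> 2
  vertices has a 3-colouring in which every edge lies in a rainbow triangle: for n \<le> 1 there
  is nothing to show, K_4 is coloured by its three perfect matchings, and two new vertices a, b
  are added by giving ab colour 1, the other edges at a colour 2 and those at b colour 0.\<close>

lemma cycle_edges_eq_image:
  "cycle_edges vs = (\<lambda>i. {vs ! i, vs ! ((i + 1) mod length vs)}) ` {..<length vs}"
  unfolding cycle_edges_def by auto

lemma successor_mod_not_involutive:
  fixes L i j :: nat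
  assumes "i < L" "j < L" "3 \<le> L" "i = (j + 1) mod L" "j = (i + 1) mod L"
  shows False
proof -
  have succ: "(k + 1) mod L = (if k + 1 = L then 0 else k + 1)" if "k < L" for k
    using that by auto
  have "i = (if j + 1 = L then 0 else j + 1)"
    using assms(4) succ[OF assms(2)] by simp
  moreover have "j = (if i + 1 = L then 0 else i + 1)"
    using assms(5) succ[OF assms(1)] by simp
  ultimately show False
    using assms(3) by (simp only: split: if_split_asm)
qed

lemma card_cycle_edges:
  assumes "distinct vs" "3 \<le> length vs"
  shows "card (cycle_edges vs) = length vs"
proof -
  let ?L = "length vs"
  have "inj_on (\<lambda>i. {vs ! i, vs ! ((i + 1) mod ?L)}) {..<?L}"
  proof (rule inj_onI, rule ccontr)
    fix i j assume i: "i \<in> {..<?L}" and j: "j \<in> {..<?L}"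
      and eq: "{vs ! i, vs ! ((i + 1) mod ?L)} = {vs ! j, vs ! ((j + 1) mod ?L)}" and "i \<noteq> j"
    then have "vs ! i \<noteq> vs ! j"
      using assms(1) by (simp add: nth_eq_iff_index_eq)
    then have "vs ! i = vs ! ((j + 1) mod ?L)" "vs ! ((i + 1) mod ?L) = vs ! j"
      using eq by (auto simp: doubleton_eq_iff)
    moreover have "(i + 1) mod ?L < ?L" "(j + 1) mod ?L < ?L"
      using assms(2) by (auto intro: mod_less_divisor)
    ultimately have "i = (j + 1) mod ?L" "j = (i + 1) mod ?L"
      using i j assms(1) by (simp_all add: nth_eq_iff_index_eq)
    then show False
      using successor_mod_not_involutive i j assms(2) by blast
  qed
  then show ?thesis
    unfolding cycle_edges_eq_image by (simp add: card_image)
qed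

lemma cycle_edges_subset: "is_cycle V E vs \<Longrightarrow> cycle_edges vs \<subseteq> E"
  unfolding is_cycle_def cycle_edges_def by auto

lemma three_le_length_if_cycle: "is_cycle V E vs \<Longrightarrow> 3 \<le> length vs"
  unfolding is_cycle_def by simp

lemma three_le_card_if_cycle:
  assumes "is_cycle V E vs" "finite V"
  shows "3 \<le> card V"
proof -
  have "length vs = card (set vs)"
    using assms(1) unfolding is_cycle_def by (simp add: distinct_card)
  also have "\<dots> \<le> card V"
    using assms unfolding is_cycle_def by (simp add: card_mono)
  finally show ?thesis
    using three_le_length_if_cycle[OF assms(1)] by linarith
qed

lemma length_le_card_colours_if_rainbow_cycle:
  assumes "rainbow_cycle V E c vs" "finite E"
  shows "length vs \<le> card (c ` E)"
proof -
  have cyc: "is_cycle V E vs" and inj: "inj_on c (cycle_edges vs)"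
    using assms(1) unfolding rainbow_cycle_def by auto
  have "length vs = card (c ` cycle_edges vs)"
    using cyc inj by (simp add: card_image card_cycle_edges is_cycle_def)
  also have "\<dots> \<le> card (c ` E)"
    using cycle_edges_subset[OF cyc] assms(2) by (intro card_mono) auto
  finally show ?thesis .
qed

lemma rainbow_cycle_through_pair:
  assumes "k_rainbow_cycle_colouring 2 V E c" "x \<in> V" "y \<in> V" "x \<noteq> y"
  obtains vs where "rainbow_cycle V E c vs" "x \<in> set vs" "y \<in> set vs"
proof -
  have "{x, y} \<subseteq> V" "card {x, y} = 2"
    using assms(2-4) by auto
  then obtain vs where "rainbow_cycle V E c vs" "{x, y} \<subseteq> set vs"
    using assms(1) unfolding k_rainbow_cycle_colouring_def by blast
  then show ?thesis
    using that by simp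
qed

lemma three_le_card_colours:
  assumes "k_rainbow_cycle_colouring 2 V E c" "finite E" "x \<in> V" "y \<in> V" "x \<noteq> y"
  shows "3 \<le> card (c ` E)"
proof -
  obtain vs where rainbow: "rainbow_cycle V E c vs"
    using rainbow_cycle_through_pair[OF assms(1,3-5)] .
  then have "3 \<le> length vs"
    unfolding rainbow_cycle_def by (blast intro: three_le_length_if_cycle)
  also have "\<dots> \<le> card (c ` E)"
    using rainbow assms(2) by (rule length_le_card_colours_if_rainbow_cycle)
  finally show ?thesis .
qed

lemma cycle_edges_triangle: "cycle_edges [x, y, z] = {{x, y}, {y, z}, {z, x}}"
proof -
  have "{..<length [x, y, z]} = {0, 1, 2}"
    by auto
  then show ?thesis
    unfolding cycle_edges_eq_image by simp
qed

lemma is_cycle_triangle_iff: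
  "is_cycle V E [x, y, z] \<longleftrightarrow>
     distinct [x, y, z] \<and> {x, y, z} \<subseteq> V \<and> {x, y} \<in> E \<and> {y, z} \<in> E \<and> {z, x} \<in> E"
  unfolding is_cycle_def by (auto simp: All_less_Suc)

lemma adjacent_if_on_triangle:
  assumes "is_cycle V E vs" "length vs = 3" "x \<in> set vs" "y \<in> set vs" "x \<noteq> y"
  shows "{x, y} \<in> E"
proof -
  obtain p q r where "vs = [p, q, r]"
    using assms(2) by (auto simp: length_Suc_conv numeral_3_eq_3)
  then show ?thesis
    using assms(1,3-5) by (auto simp: is_cycle_triangle_iff insert_commute)
qed

lemma finite_edges:
  assumes "simple_graph V E"
  shows "finite E"
proof -
  have "E \<subseteq> Pow V" and "finite V"
    using assms unfolding simple_graph_def by auto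
  then show ?thesis
    by (simp add: finite_subset)
qed

lemma adjacent_if_rainbow_cycle_colouring_with_3_colours:
  assumes "k_rainbow_cycle_colouring 2 V E c" "finite E" "card (c ` E) \<le> 3"
    and "x \<in> V" "y \<in> V" "x \<noteq> y"
  shows "{x, y} \<in> E"
proof -
  obtain vs where rainbow: "rainbow_cycle V E c vs" and on_vs: "x \<in> set vs" "y \<in> set vs"
    using rainbow_cycle_through_pair[OF assms(1,4-6)] .
  then have cycle: "is_cycle V E vs"
    unfolding rainbow_cycle_def by simp
  have "length vs = 3"
    using length_le_card_colours_if_rainbow_cycle[OF rainbow assms(2)] assms(3)
      three_le_length_if_cycle[OF cycle] by linarith
  then show ?thesis
    using adjacent_if_on_triangle[OF cycle _ on_vs assms(6)] by simp
qed

lemma complete_if_rainbow_cycle_colouring_with_3_colours: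
  assumes graph: "simple_graph V E" and colouring: "k_rainbow_cycle_colouring 2 V E c"
    and three: "card (c ` E) = 3"
  shows "complete_graph V E \<and> 3 \<le> card V"
proof -
  have edges: "E \<subseteq> {e. e \<subseteq> V \<and> card e = 2}"
    using graph unfolding simple_graph_def by auto
  have adjacent: "{x, y} \<in> E" if "x \<in> V" "y \<in> V" "x \<noteq> y" for x y
    using adjacent_if_rainbow_cycle_colouring_with_3_colours[OF colouring finite_edges[OF graph]]
      three that by simp
  have "{e. e \<subseteq> V \<and> card e = 2} \<subseteq> E"
    using adjacent by (auto simp: card_2_iff)
  then have "complete_graph V E"
    using edges unfolding complete_graph_def by blast
  moreover obtain e where "e \<in> E"
    using three by fastforce
  then have "e \<subseteq> V" "card e = 2"
    using edges by auto
  then obtain x y where "x \<in> V" "y \<in> V" "x \<noteq> y"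
    by (metis card_2_iff insert_subset)
  then obtain vs where "rainbow_cycle V E c vs"
    by (rule rainbow_cycle_through_pair[OF colouring])
  then have "3 \<le> card V"
    using graph three_le_card_if_cycle unfolding rainbow_cycle_def simple_graph_def by blast
  ultimately show ?thesis ..
qed

lemma rainbow_cycle_colouring_exists:
  assumes "in_F k V E" "finite E"
  shows "\<exists>c :: 'a set \<Rightarrow> nat. k_rainbow_cycle_colouring k V E c"
proof -
  obtain c :: "'a set \<Rightarrow> nat" where inj: "inj_on c E"
    using finite_imp_inj_to_nat_seg[OF assms(2)] by blast
  have "k_rainbow_cycle_colouring k V E c"
    unfolding k_rainbow_cycle_colouring_def rainbow_cycle_def
  proof (intro allI impI)
    fix S assume "S \<subseteq> V" "card S = k"
    then obtain vs where "is_cycle V E vs" "S \<subseteq> set vs"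
      using assms(1) unfolding in_F_def by blast
    then show "\<exists>vs. (is_cycle V E vs \<and> inj_on c (cycle_edges vs)) \<and> S \<subseteq> set vs"
      using inj_on_subset[OF inj cycle_edges_subset] by blast
  qed
  then show ?thesis
    by blast
qed

lemma crx_attained:
  assumes "in_F k V E" "finite E"
  obtains c :: "'a set \<Rightarrow> nat"
  where "k_rainbow_cycle_colouring k V E c" "card (c ` E) = crx k V E"
proof -
  have "\<exists>c :: 'a set \<Rightarrow> nat. k_rainbow_cycle_colouring k V E c \<and> card (c ` E) = crx k V E"
    unfolding crx_def by (rule LeastI_ex) (use rainbow_cycle_colouring_exists[OF assms] in blast)
  then show ?thesis
    using that by blast
qed

lemma crx_le:
  fixes c :: "'a set \<Rightarrow> nat"
  shows "k_rainbow_cycle_colouring k V E c \<Longrightarrow> crx k V E \<le> card (c ` E)"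
  unfolding crx_def by (rule Least_le) blast

lemma three_le_crx_2:
  assumes "in_F 2 V E" "finite E" "x \<in> V" "y \<in> V" "x \<noteq> y"
  shows "3 \<le> crx 2 V E"
proof -
  obtain c :: "'a set \<Rightarrow> nat"
    where colouring: "k_rainbow_cycle_colouring 2 V E c" and "card (c ` E) = crx 2 V E"
    using crx_attained[OF assms(1,2)] .
  then show ?thesis
    using three_le_card_colours[OF colouring assms(2-5)] by simp
qed

definition rainbow_triangle_colouring :: "'a set \<Rightarrow> ('a set \<Rightarrow> 'c) \<Rightarrow> bool" where
  "rainbow_triangle_colouring V c \<longleftrightarrow> (\<forall>x\<in>V. \<forall>y\<in>V. x \<noteq> y \<longrightarrow> (\<exists>z\<in>V. z \<noteq> x \<and> z \<noteq> y \<and>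
     c {x, y} \<noteq> c {y, z} \<and> c {y, z} \<noteq> c {z, x} \<and> c {x, y} \<noteq> c {z, x}))"

lemma rainbow_triangle_colouring_if_card_le_1:
  "finite V \<Longrightarrow> card V \<le> 1 \<Longrightarrow> rainbow_triangle_colouring V c"
  using card_le_Suc0_iff_eq[of V] unfolding rainbow_triangle_colouring_def by auto

definition K4_colouring :: "'a \<Rightarrow> 'a \<Rightarrow> 'a \<Rightarrow> 'a \<Rightarrow> 'a set \<Rightarrow> nat" where
  "K4_colouring a b d f e =
     (if e = {a, b} \<or> e = {d, f} then 0 else if e = {a, d} \<or> e = {b, f} then 1 else 2)"

lemma rainbow_triangle_colouring_K4:
  assumes "distinct [a, b, d, f]"
  shows "rainbow_triangle_colouring {a, b, d, f} (K4_colouring a b d f)"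
proof -
  let ?C = "K4_colouring a b d f"
  have colours: "?C {a, b} = 0" "?C {b, a} = 0" "?C {d, f} = 0" "?C {f, d} = 0"
    "?C {a, d} = 1" "?C {d, a} = 1" "?C {b, f} = 1" "?C {f, b} = 1"
    "?C {a, f} = 2" "?C {f, a} = 2" "?C {b, d} = 2" "?C {d, b} = 2"
    using assms unfolding K4_colouring_def by (auto simp: doubleton_eq_iff)
  show ?thesis
    unfolding rainbow_triangle_colouring_def using assms by (simp add: colours) blast
qed

definition extend_colouring :: "'a \<Rightarrow> 'a \<Rightarrow> ('a set \<Rightarrow> nat) \<Rightarrow> 'a set \<Rightarrow> nat" where
  "extend_colouring a b c e = (if e = {a, b} then 1 else if a \<in> e then 2 else if b \<in> e then 0 else c e)"

lemma extend_colouring_rainbow_triangle_at_new_vertex: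
  fixes c :: "'a set \<Rightarrow> nat"
  assumes new: "a \<notin> R" "b \<notin> R" "a \<noteq> b" and "R \<noteq> {}"
    and "x \<in> {a, b}" "y \<in> insert a (insert b R)" "x \<noteq> y"
  defines "C \<equiv> extend_colouring a b c"
  shows "\<exists>z\<in>insert a (insert b R). z \<noteq> x \<and> z \<noteq> y \<and>
    C {x, y} \<noteq> C {y, z} \<and> C {y, z} \<noteq> C {z, x} \<and> C {x, y} \<noteq> C {z, x}"
proof -
  obtain r where r: "r \<in> R"
    using \<open>R \<noteq> {}\<close> by blast
  have new_edge: "C {a, b} = 1" "C {b, a} = 1"
    unfolding C_def extend_colouring_def by (auto simp: insert_commute)
  have edges_to_R: "C {a, t} = 2" "C {t, a} = 2" "C {b, t} = 0" "C {t, b} = 0" if "t \<in> R" for t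
  proof -
    have "t \<noteq> a" "t \<noteq> b"
      using that new by auto
    then show "C {a, t} = 2" "C {t, a} = 2" "C {b, t} = 0" "C {t, b} = 0"
      using new(3) unfolding C_def extend_colouring_def by (simp_all add: doubleton_eq_iff)
  qed
  have "a \<noteq> r" "b \<noteq> r"
    using new r by auto
  consider "x = a" "y = b" | "x = b" "y = a" | "x = a" "y \<in> R" | "x = b" "y \<in> R"
    using assms(5-7) by auto
  then show ?thesis
  proof cases
    case 1
    then show ?thesis
      using r \<open>a \<noteq> r\<close> \<open>b \<noteq> r\<close> new_edge edges_to_R[OF r] by (intro bexI[of _ r]) simp_all
  next
    case 2
    then show ?thesis
      using r \<open>a \<noteq> r\<close> \<open>b \<noteq> r\<close> new_edge edges_to_R[OF r] by (intro bexI[of _ r]) simp_all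
  next
    case 3
    then show ?thesis
      using new new_edge edges_to_R[of y] by (intro bexI[of _ b]) auto
  next
    case 4
    then show ?thesis
      using new new_edge edges_to_R[of y] by (intro bexI[of _ a]) auto
  qed
qed

lemma rainbow_triangle_colouring_extend:
  assumes tri: "rainbow_triangle_colouring R c" and new: "a \<notin> R" "b \<notin> R" "a \<noteq> b"
    and "R \<noteq> {}"
  shows "rainbow_triangle_colouring (insert a (insert b R)) (extend_colouring a b c)"
  unfolding rainbow_triangle_colouring_def
proof (intro ballI impI)
  let ?C = "extend_colouring a b c"
  fix x y assume x: "x \<in> insert a (insert b R)" and y: "y \<in> insert a (insert b R)" and "x \<noteq> y"
  show "\<exists>z\<in>insert a (insert b R). z \<noteq> x \<and> z \<noteq> y \<and>
    ?C {x, y} \<noteq> ?C {y, z} \<and> ?C {y, z} \<noteq> ?C {z, x} \<and> ?C {x, y} \<noteq> ?C {z, x}"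
  proof (cases "x \<in> R \<and> y \<in> R")
    case True
    then obtain z where z: "z \<in> R" "z \<noteq> x" "z \<noteq> y"
      "c {x, y} \<noteq> c {y, z}" "c {y, z} \<noteq> c {z, x}" "c {x, y} \<noteq> c {z, x}"
      using tri \<open>x \<noteq> y\<close> unfolding rainbow_triangle_colouring_def by blast
    have old_edges: "?C {s, t} = c {s, t}" if "s \<in> R" "t \<in> R" for s t
    proof -
      have "s \<noteq> a" "t \<noteq> a" "s \<noteq> b" "t \<noteq> b"
        using that new by auto
      then show ?thesis
        unfolding extend_colouring_def by (simp add: doubleton_eq_iff)
    qed
    have "?C {x, y} = c {x, y}" "?C {y, z} = c {y, z}" "?C {z, x} = c {z, x}"
      using True z(1) old_edges by simp_all
    then show ?thesis
      using z by (intro bexI[of _ z]) simp_all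
  next
    case False
    then consider "x \<in> {a, b}" | "y \<in> {a, b}" "x \<in> insert a (insert b R)"
      using x y by auto
    then show ?thesis
    proof cases
      case 1
      then show ?thesis
        using extend_colouring_rainbow_triangle_at_new_vertex[OF new \<open>R \<noteq> {}\<close> _ y \<open>x \<noteq> y\<close>]
        by blast
    next
      case 2
      \<comment> \<open>the condition is symmetric in x and y\<close>
      then obtain z where "z \<in> insert a (insert b R)" "z \<noteq> y" "z \<noteq> x"
        "?C {y, x} \<noteq> ?C {x, z}" "?C {x, z} \<noteq> ?C {z, y}" "?C {y, x} \<noteq> ?C {z, y}"
        using extend_colouring_rainbow_triangle_at_new_vertex[OF new \<open>R \<noteq> {}\<close>, of y x c]
          \<open>x \<noteq> y\<close> by blast
      then show ?thesis
        by (intro bexI[of _ z]) (auto simp: insert_commute)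
    qed
  qed
qed

lemma rainbow_triangle_colouring_exists:
  assumes "finite V" "card V \<noteq> 2"
  shows "\<exists>c :: 'a set \<Rightarrow> nat. range c \<subseteq> {..<3} \<and> rainbow_triangle_colouring V c"
  using assms
proof (induction "card V" arbitrary: V rule: less_induct)
  case less
  show ?case
  proof (cases "card V \<le> 1")
    case True
    then show ?thesis
      using rainbow_triangle_colouring_if_card_le_1[OF less.prems(1)]
      by (intro exI[of _ "\<lambda>_. 0"]) auto
  next
    case False
    then have three: "3 \<le> card V"
      using less.prems(2) by simp
    then have "card V = Suc (Suc (card V - 2))"
      by simp
    then obtain a b R where V: "V = insert a (insert b R)" and new: "a \<notin> R" "b \<notin> R" "a \<noteq> b"
      and card_R: "card R = card V - 2"
      by (auto simp: card_Suc_eq)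
    have "finite R"
      using less.prems(1) V by simp
    show ?thesis
    proof (cases "card V = 4")
      case True
      then obtain d f where "R = {d, f}" "d \<noteq> f"
        using card_R by (auto simp: card_2_iff)
      then have "V = {a, b, d, f}" "distinct [a, b, d, f]"
        using V new by auto
      moreover have "range (K4_colouring a b d f) \<subseteq> {..<3}"
        unfolding K4_colouring_def by auto
      ultimately show ?thesis
        using rainbow_triangle_colouring_K4 by metis
    next
      case False
      then have "card R \<noteq> 2" "card R < card V" "R \<noteq> {}"
        using card_R three by auto
      then obtain c :: "'a set \<Rightarrow> nat" where range: "range c \<subseteq> {..<3}"
        and tri: "rainbow_triangle_colouring R c"
        using less.hyps \<open>finite R\<close> by blast
      have "rainbow_triangle_colouring V (extend_colouring a b c)"
        unfolding V using tri new \<open>R \<noteq> {}\<close> by (rule rainbow_triangle_colouring_extend)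
      moreover have "range (extend_colouring a b c) \<subseteq> {..<3}"
        using range unfolding extend_colouring_def by auto
      ultimately show ?thesis
        by blast
    qed
  qed
qed

lemma rainbow_cycle_colouring_if_rainbow_triangle_colouring:
  assumes complete: "complete_graph V E" and tri: "rainbow_triangle_colouring V c"
  shows "k_rainbow_cycle_colouring 2 V E c"
  unfolding k_rainbow_cycle_colouring_def
proof (intro allI impI)
  fix S assume "S \<subseteq> V" "card S = 2"
  then obtain x y where S: "S = {x, y}" "x \<noteq> y" and "x \<in> V" "y \<in> V"
    by (auto simp: card_2_iff)
  then obtain z where "z \<in> V" "z \<noteq> x" "z \<noteq> y"
    and rainbow: "c {x, y} \<noteq> c {y, z}" "c {y, z} \<noteq> c {z, x}" "c {x, y} \<noteq> c {z, x}"
    using tri unfolding rainbow_triangle_colouring_def by blast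
  have "is_cycle V E [x, y, z]"
    using complete \<open>x \<in> V\<close> \<open>y \<in> V\<close> \<open>z \<in> V\<close> S(2) \<open>z \<noteq> x\<close> \<open>z \<noteq> y\<close>
    unfolding is_cycle_triangle_iff complete_graph_def by auto
  moreover have "inj_on c (cycle_edges [x, y, z])"
    using rainbow unfolding cycle_edges_triangle inj_on_def by auto
  ultimately show "\<exists>vs. rainbow_cycle V E c vs \<and> S \<subseteq> set vs"
    unfolding rainbow_cycle_def S by (intro exI[of _ "[x, y, z]"]) simp
qed

lemma crx_2_le_3_if_complete:
  assumes "complete_graph V E" "finite V" "card V \<noteq> 2"
  shows "crx 2 V E \<le> 3"
proof -
  obtain c :: "'a set \<Rightarrow> nat" where "range c \<subseteq> {..<3}" "rainbow_triangle_colouring V c"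
    using rainbow_triangle_colouring_exists[OF assms(2,3)] by blast
  then have "crx 2 V E \<le> card (c ` E)"
    using assms(1) by (blast intro: crx_le rainbow_cycle_colouring_if_rainbow_triangle_colouring)
  also have "\<dots> \<le> card {..<3::nat}"
    using \<open>range c \<subseteq> {..<3}\<close> by (intro card_mono) auto
  finally show ?thesis
    by simp
qed

theorem theorem3:
  fixes V :: "'a set" and E :: "'a set set"
  assumes "simple_graph V E" and "in_F 2 V E"
  shows "crx 2 V E = 3 \<longleftrightarrow> (complete_graph V E \<and> card V \<ge> 3)"
proof
  assume "crx 2 V E = 3"
  moreover obtain c :: "'a set \<Rightarrow> nat"
    where "k_rainbow_cycle_colouring 2 V E c" "card (c ` E) = crx 2 V E"
    using crx_attained[OF assms(2) finite_edges[OF assms(1)]] .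
  ultimately show "complete_graph V E \<and> card V \<ge> 3"
    using complete_if_rainbow_cycle_colouring_with_3_colours[OF assms(1)] by simp
next
  assume complete: "complete_graph V E \<and> card V \<ge> 3"
  have "finite V"
    using assms(1) unfolding simple_graph_def by simp
  obtain S where "S \<subseteq> V" "card S = 2"
    using obtain_subset_with_card_n[of 2 V] complete by auto
  then obtain x y where "x \<in> V" "y \<in> V" "x \<noteq> y"
    by (auto simp: card_2_iff)
  then have "3 \<le> crx 2 V E"
    by (rule three_le_crx_2[OF assms(2) finite_edges[OF assms(1)]])
  moreover have "crx 2 V E \<le> 3"
    using complete by (intro crx_2_le_3_if_complete[OF _ \<open>finite V\<close>]) auto
  ultimately show "crx 2 V E = 3"
    by simp
qed

end
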